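(* If $f$ satisfies the rate conditions of order $0$, then for every $z\in D$, $f(J_u(z,1/L)\cap D)\subset\mathrm{int}\,J_u(f(z),1/L)\cup\{f(z)\}$.
   Context: $c,u,s$ positive integers, $\Lambda=(\mathbb{R}/\mathbb{Z})^c$, $R_\Lambda=\tfrac12$; points are "in the same chart" if their $\lambda$-components have lifts to $\mathbb{R}^c$ at distance $\le R_\Lambda$; differences, norms, cones and derivatives are computed in such lifts. $\overline B_n(R)$ closed ball of radius $R$ at $0$ in $\mathbb{R}^n$; Euclidean norms. $0<R<R_\Lambda/2$, $D=\Lambda\times\overline B_u(R)\times\overline B_s(R)$, points $z=(\lambda,x,y)$, projections $\pi_\lambda,\pi_x,\pi_y,\pi_{(\lambda,y)}$; $f:D\to\Lambda\times\mathbb{R}^u\times\mathbb{R}^s$ is $C^1$, $f=(f_\lambda,f_x,f_y)$. $m(A)=\max\{c:\|Av\|\ge c\|v\|\}$, $m(\mathbf A)=\inf_{A\in\mathbf A}m(A)$; $[\partial g/\partial w(U)]$ = set of matrices with $(i,j)$ entry in $[\inf_U\partial g_i/\partial w_j,\sup_U\partial g_i/\partial w_j]$; $P(z)=\{w\in D:\|\pi_\lambda w-\pi_\lambda z\|\le R_\Lambda/2\}$. Fix $L\in(2R/R_\Lambda,1)$. $\mu_{s,1}=\sup_D\{\|\partial_yf_y\|+\frac1L\|\partial_{(\lambda,x)}f_y\|\}$, $\xi_{u,1,P}=\inf_{z\in D}m[\partial_xf_x(P(z))]-\frac1L\sup_D\|\partial_{(\lambda,y)}f_x\|$, $\mu_{cs,1}=\sup_D\{\|\partial_{(\lambda,y)}f_{(\lambda,y)}\|+L\|\partial_xf_{(\lambda,y)}\|\}$,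 $\xi_{cu,1,P}=\inf_{z\in D}m[\partial_{(\lambda,x)}f_{(\lambda,x)}(P(z))]-L\sup_D\|\partial_yf_{(\lambda,x)}\|$. Rate conditions of order $0$: $\mu_{s,1}<1<\xi_{u,1,P}$, $\mu_{cs,1}<\xi_{u,1,P}$, $\mu_{s,1}<\xi_{cu,1,P}$. Unstable cone: $J_u(z,M)=\{(\lambda,x,y):\|(\lambda,y)-\pi_{(\lambda,y)}z\|\le M\|x-\pi_xz\|\}$. *)

theory Defs
  imports "HOL-Analysis.Analysis"
begin

type_synonym ('c,'u,'s) pt = "(real^'c) \<times> (real^'u) \<times> (real^'s)"

text \<open>Torus \<Lambda> = (R/Z)^c is represented through lifts in real^'c; integer lattice and
  torus distance (minimal lift distance).\<close>
definition intvecs :: "(real^'n) set" where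
  "intvecs = {k. \<forall>i. k $ i \<in> \<int>}"

definition tdist :: "real^'n \<Rightarrow> real^'n \<Rightarrow> real" where
  "tdist a b = (INF k\<in>intvecs. norm (a - b - k))"

definition RLam :: real where "RLam = 1/2"

definition Dom :: "real \<Rightarrow> ('c::finite,'u::finite,'s::finite) pt set" where
  "Dom R = UNIV \<times> cball 0 R \<times> cball 0 R"

definition Pset :: "real \<Rightarrow> ('c::finite,'u::finite,'s::finite) pt \<Rightarrow> ('c,'u,'s) pt set" where
  "Pset R z = {w \<in> Dom R. tdist (fst w) (fst z) \<le> RLam / 2}"

definition minnorm :: "('a::real_normed_vector \<Rightarrow> 'b::real_normed_vector) \<Rightarrow> real" where
  "minnorm A = Sup {c. \<forall>v. c * norm v \<le> norm (A v)}"

definition interval_maps :: "('p \<Rightarrow> ('a::euclidean_space \<Rightarrow> 'b::euclidean_space)) \<Rightarrow> 'p set \<Rightarrow> ('a \<Rightarrow> 'b) set" where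
  "interval_maps g U = {A. linear A \<and> (\<forall>i\<in>Basis. \<forall>j\<in>Basis.
      (INF w\<in>U. g w j \<bullet> i) \<le> A j \<bullet> i \<and> A j \<bullet> i \<le> (SUP w\<in>U. g w j \<bullet> i))}"

definition minnorm_set :: "('a::real_normed_vector \<Rightarrow> 'b::real_normed_vector) set \<Rightarrow> real" where
  "minnorm_set S = (INF A\<in>S. minnorm A)"

definition dy_fy :: "(('c::finite,'u::finite,'s::finite) pt \<Rightarrow> ('c,'u,'s) pt) \<Rightarrow> real^'s \<Rightarrow> real^'s" where
  "dy_fy A = (\<lambda>v. snd (snd (A (0, 0, v))))"
definition dlx_fy :: "(('c::finite,'u::finite,'s::finite) pt \<Rightarrow> ('c,'u,'s) pt) \<Rightarrow> ((real^'c) \<times> (real^'u)) \<Rightarrow> real^'s" where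
  "dlx_fy A = (\<lambda>(a,b). snd (snd (A (a, b, 0))))"
definition dx_fx :: "(('c::finite,'u::finite,'s::finite) pt \<Rightarrow> ('c,'u,'s) pt) \<Rightarrow> real^'u \<Rightarrow> real^'u" where
  "dx_fx A = (\<lambda>b. fst (snd (A (0, b, 0))))"
definition dly_fx :: "(('c::finite,'u::finite,'s::finite) pt \<Rightarrow> ('c,'u,'s) pt) \<Rightarrow> ((real^'c) \<times> (real^'s)) \<Rightarrow> real^'u" where
  "dly_fx A = (\<lambda>(a,c). fst (snd (A (a, 0, c))))"
definition dly_fly :: "(('c::finite,'u::finite,'s::finite) pt \<Rightarrow> ('c,'u,'s) pt) \<Rightarrow> ((real^'c) \<times> (real^'s)) \<Rightarrow> ((real^'c) \<times> (real^'s))" where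
  "dly_fly A = (\<lambda>(a,c). (fst (A (a, 0, c)), snd (snd (A (a, 0, c)))))"
definition dx_fly :: "(('c::finite,'u::finite,'s::finite) pt \<Rightarrow> ('c,'u,'s) pt) \<Rightarrow> real^'u \<Rightarrow> ((real^'c) \<times> (real^'s))" where
  "dx_fly A = (\<lambda>b. (fst (A (0, b, 0)), snd (snd (A (0, b, 0)))))"
definition dlx_flx :: "(('c::finite,'u::finite,'s::finite) pt \<Rightarrow> ('c,'u,'s) pt) \<Rightarrow> ((real^'c) \<times> (real^'u)) \<Rightarrow> ((real^'c) \<times> (real^'u))" where
  "dlx_flx A = (\<lambda>(a,b). (fst (A (a, b, 0)), fst (snd (A (a, b, 0)))))"
definition dy_flx :: "(('c::finite,'u::finite,'s::finite) pt \<Rightarrow> ('c,'u,'s) pt) \<Rightarrow> real^'s \<Rightarrow> ((real^'c) \<times> (real^'u))" where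
  "dy_flx A = (\<lambda>c. (fst (A (0, 0, c)), fst (snd (A (0, 0, c)))))"

definition mu_s1 :: "real \<Rightarrow> real \<Rightarrow> (('c::finite,'u::finite,'s::finite) pt \<Rightarrow> ('c,'u,'s) pt \<Rightarrow>\<^sub>L ('c,'u,'s) pt) \<Rightarrow> real" where
  "mu_s1 R L Df = (SUP z\<in>Dom R. onorm (dy_fy (blinfun_apply (Df z))) + (1/L) * onorm (dlx_fy (blinfun_apply (Df z))))"

definition xi_u1P :: "real \<Rightarrow> real \<Rightarrow> (('c::finite,'u::finite,'s::finite) pt \<Rightarrow> ('c,'u,'s) pt \<Rightarrow>\<^sub>L ('c,'u,'s) pt) \<Rightarrow> real" where
  "xi_u1P R L Df = (INF z\<in>Dom R. minnorm_set (interval_maps (\<lambda>w. dx_fx (blinfun_apply (Df w))) (Pset R z)))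
      - (1/L) * (SUP z\<in>Dom R. onorm (dly_fx (blinfun_apply (Df z))))"

definition mu_cs1 :: "real \<Rightarrow> real \<Rightarrow> (('c::finite,'u::finite,'s::finite) pt \<Rightarrow> ('c,'u,'s) pt \<Rightarrow>\<^sub>L ('c,'u,'s) pt) \<Rightarrow> real" where
  "mu_cs1 R L Df = (SUP z\<in>Dom R. onorm (dly_fly (blinfun_apply (Df z))) + L * onorm (dx_fly (blinfun_apply (Df z))))"

definition xi_cu1P :: "real \<Rightarrow> real \<Rightarrow> (('c::finite,'u::finite,'s::finite) pt \<Rightarrow> ('c,'u,'s) pt \<Rightarrow>\<^sub>L ('c,'u,'s) pt) \<Rightarrow> real" where
  "xi_cu1P R L Df = (INF z\<in>Dom R. minnorm_set (interval_maps (\<lambda>w. dlx_flx (blinfun_apply (Df w))) (Pset R z)))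
      - L * (SUP z\<in>Dom R. onorm (dy_flx (blinfun_apply (Df z))))"

definition rate_conditions_0 :: "real \<Rightarrow> real \<Rightarrow> (('c::finite,'u::finite,'s::finite) pt \<Rightarrow> ('c,'u,'s) pt \<Rightarrow>\<^sub>L ('c,'u,'s) pt) \<Rightarrow> bool" where
  "rate_conditions_0 R L Df \<longleftrightarrow>
     mu_s1 R L Df < 1 \<and> 1 < xi_u1P R L Df \<and> mu_cs1 R L Df < xi_u1P R L Df \<and> mu_s1 R L Df < xi_cu1P R L Df"

text \<open>Unstable cone, differences taken in lifted coordinates.\<close>
definition Ju :: "('c::finite,'u::finite,'s::finite) pt \<Rightarrow> real \<Rightarrow> ('c,'u,'s) pt set" where
  "Ju z M = {w. norm (fst w - fst z, snd (snd w) - snd (snd z)) \<le> M * norm (fst (snd w) - fst (snd z))}"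

end

theory Submission
  imports Defs
begin

text \<open>Write \<open>w - z = (a, b, c)\<close> for a point \<open>w\<close> of the cone \<open>J\<^sub>u(z, 1/L)\<close>, so that
  \<open>\<parallel>(a, c)\<parallel> \<le> \<parallel>b\<parallel>/L\<close>. Integrating \<open>Df\<close> along the segment from \<open>z\<close> to \<open>w\<close>, the change of
  the unstable coordinate is \<open>A b + E\<close>: here \<open>A\<close> is the average of \<open>\<partial>\<^sub>xf\<^sub>x\<close> over the segment,
  hence a member of the interval matrix over \<open>P\<close> of the midpoint, and \<open>E\<close> comes from the
  \<open>(\<lambda>, y)\<close>-derivative applied to \<open>(a, c)\<close>, so this change has norm at least \<open>\<xi>\<^sub>u \<parallel>b\<parallel>\<close>.
  The change of the \<open>(\<lambda>, y)\<close> coordinates is at most \<open>\<mu>\<^sub>c\<^sub>s \<parallel>b\<parallel>/L\<close>, and \<open>\<mu>\<^sub>c\<^sub>s < \<xi>\<^sub>u\<close>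
  puts \<open>f w\<close> strictly inside \<open>J\<^sub>u(f z, 1/L)\<close>. The suprema and infima in the rate conditions
  are finite because \<open>Df\<close> is \<open>\<int>\<^sup>c\<close>-periodic in \<open>\<lambda>\<close>, hence bounded.\<close>

lemma minnorm_le: "minnorm A * norm x \<le> norm (A x)"
proof (cases "x = 0")
  case False
  then have nx: "norm x > 0" by simp
  have "minnorm A \<le> norm (A x) / norm x" unfolding minnorm_def
  proof (rule cSup_least)
    show "{c. \<forall>v. c * norm v \<le> norm (A v)} \<noteq> {}" by (auto intro!: exI[of _ 0])
  next
    fix c assume "c \<in> {c. \<forall>v. c * norm v \<le> norm (A v)}"
    then show "c \<le> norm (A x) / norm x" using nx by (simp add: pos_le_divide_eq)
  qed
  then show ?thesis using nx by (simp add: pos_le_divide_eq)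
qed simp

lemma minnorm_nonneg: "0 \<le> minnorm (A :: 'a::euclidean_space \<Rightarrow> 'b::real_normed_vector)"
proof -
  obtain v :: 'a where v: "v \<in> Basis" using nonempty_Basis by blast
  have "bdd_above {c. \<forall>v. c * norm v \<le> norm (A v)}"
  proof (rule bdd_aboveI)
    fix c assume "c \<in> {c. \<forall>v. c * norm v \<le> norm (A v)}"
    then show "c \<le> norm (A v)" using v by (metis (mono_tags) mem_Collect_eq mult.right_neutral norm_Basis)
  qed
  then show ?thesis unfolding minnorm_def by (rule cSup_upper[rotated]) auto
qed

lemma minnorm_set_nonneg:
  "S \<noteq> {} \<Longrightarrow> 0 \<le> minnorm_set (S :: ('a::euclidean_space \<Rightarrow> 'b::real_normed_vector) set)"
  unfolding minnorm_set_def by (intro cINF_greatest minnorm_nonneg)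

lemma tdist_le_norm: "tdist x y \<le> norm (x - y)"
proof -
  have "tdist x y \<le> norm (x - y - 0)" unfolding tdist_def
    by (rule cINF_lower) (auto simp: intvecs_def intro!: bdd_belowI2[of _ 0])
  then show ?thesis by simp
qed

lemma has_integral_unit_interval_norm_le:
  fixes g :: "real \<Rightarrow> 'a::real_normed_vector"
  assumes g: "(g has_integral I) {0..1}" and C: "\<And>t. t \<in> {0..1} \<Longrightarrow> norm (g t) \<le> C"
  shows "norm I \<le> C"
proof -
  have "0 \<le> C" using C[of 0] norm_ge_zero[of "g 0"] by (simp del: norm_ge_zero)
  then have "norm I \<le> C * Henstock_Kurzweil_Integration.content {0..(1::real)}"
    by (intro has_integral_bound_real[where S="{}", OF _ _ g]) (use C in auto)
  then show ?thesis by simp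
qed

lemma has_integral_derivative_linepath:
  fixes f :: "'a::real_normed_vector \<Rightarrow> 'b::banach"
  assumes S: "convex S" "z \<in> S" "w \<in> S"
    and deriv: "\<And>x. x \<in> S \<Longrightarrow> (f has_derivative D x) (at x within S)"
  shows "((\<lambda>t. D (linepath z w t) (w - z)) has_integral f w - f z) {0..1}"
proof -
  have pS: "linepath z w ` {0..1} \<subseteq> S"
    using closed_segment_subset[OF S(2,3,1)] by (simp add: linepath_image_01)
  have "((\<lambda>t. f (linepath z w t)) has_vector_derivative D (linepath z w t) (w - z)) (at t within {0..1})"
    if t: "t \<in> {0..1}" for t
  proof -
    from has_derivative_in_compose2[OF deriv pS t
        has_vector_derivative_linepath_within[unfolded has_vector_derivative_def]]
    show ?thesis unfolding has_vector_derivative_def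
      using linear_scale[OF has_derivative_linear[OF deriv]] pS t by (simp add: image_subset_iff)
  qed
  from fundamental_theorem_of_calculus[of 0 1, OF _ this] show ?thesis
    by (simp add: linepath_0' linepath_1')
qed

lemma strict_cone_subset_interior_Ju:
  "{q. norm (fst q - fst p, snd (snd q) - snd (snd p)) < M * norm (fst (snd q) - fst (snd p))}
     \<subseteq> interior (Ju p M)"
  by (rule interior_maximal) (auto simp: Ju_def intro: less_imp_le intro!: open_Collect_less continuous_intros)

lemma bounded_linear_blinfun_block:
  fixes A :: "'a::real_normed_vector \<Rightarrow>\<^sub>L 'b::real_normed_vector"
    and J :: "'c::{real_normed_vector,perfect_space} \<Rightarrow> 'a"
  assumes P: "bounded_linear P" "\<And>u. norm (P u) \<le> norm u"
    and J: "bounded_linear J" "\<And>v. norm (J v) \<le> norm v"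
  shows "bounded_linear (\<lambda>v. P (blinfun_apply A (J v)))"
    and "onorm (\<lambda>v. P (blinfun_apply A (J v))) \<le> norm A"
proof -
  show "bounded_linear (\<lambda>v. P (blinfun_apply A (J v)))"
    using bounded_linear_compose[OF P(1) bounded_linear_compose[OF blinfun.bounded_linear_right J(1)]] .
  have "norm (P (blinfun_apply A (J v))) \<le> norm A * norm v" for v
    using P(2) norm_blinfun[of A "J v"] mult_left_mono[OF J(2) norm_ge_zero[of A]]
    by (meson order_trans)
  then show "onorm (\<lambda>v. P (blinfun_apply A (J v))) \<le> norm A"
    by (rule onorm_le)
qed

lemma
  fixes A :: "('c::finite,'u::finite,'s::finite) pt \<Rightarrow>\<^sub>L ('c,'u,'s) pt"
  shows bounded_linear_dx_fx: "bounded_linear (dx_fx (blinfun_apply A))"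
    and onorm_dx_fx_le: "onorm (dx_fx (blinfun_apply A)) \<le> norm A"
    and bounded_linear_dly_fx: "bounded_linear (dly_fx (blinfun_apply A))"
    and onorm_dly_fx_le: "onorm (dly_fx (blinfun_apply A)) \<le> norm A"
    and bounded_linear_dx_fly: "bounded_linear (dx_fly (blinfun_apply A))"
    and onorm_dx_fly_le: "onorm (dx_fly (blinfun_apply A)) \<le> norm A"
    and bounded_linear_dly_fly: "bounded_linear (dly_fly (blinfun_apply A))"
    and onorm_dly_fly_le: "onorm (dly_fly (blinfun_apply A)) \<le> norm A"
proof -
  let ?Px = "\<lambda>u::('c,'u,'s) pt. fst (snd u)" and ?Ply = "\<lambda>u::('c,'u,'s) pt. (fst u, snd (snd u))"
  let ?Jx = "\<lambda>b::real^'u. (0::real^'c, b, 0::real^'s)" and ?Jly = "\<lambda>p. (fst p, 0::real^'u, snd p)"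
  have Px: "bounded_linear ?Px" "\<And>u. norm (?Px u) \<le> norm u"
    by (auto intro!: bounded_linear_intro[of _ 1] order_trans[OF norm_fst_le norm_snd_le])
  have Ply: "bounded_linear ?Ply" "\<And>u. norm (?Ply u) \<le> norm u"
    by (auto intro!: bounded_linear_intro[of _ 1] simp: norm_Pair add_mono)
  have Jx: "bounded_linear ?Jx" "\<And>b. norm (?Jx b) \<le> norm b"
    by (auto intro!: bounded_linear_intro[of _ 1] simp: norm_Pair)
  have Jly: "bounded_linear ?Jly" "\<And>p. norm (?Jly p) \<le> norm p"
    by (auto intro!: bounded_linear_intro[of _ 1] simp: norm_Pair)
  have "dx_fx (blinfun_apply A) = (\<lambda>v. ?Px (blinfun_apply A (?Jx v)))"
    "dly_fx (blinfun_apply A) = (\<lambda>v. ?Px (blinfun_apply A (?Jly v)))"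
    "dx_fly (blinfun_apply A) = (\<lambda>v. ?Ply (blinfun_apply A (?Jx v)))"
    "dly_fly (blinfun_apply A) = (\<lambda>v. ?Ply (blinfun_apply A (?Jly v)))"
    by (auto simp: dx_fx_def dly_fx_def dx_fly_def dly_fly_def)
  with bounded_linear_blinfun_block[OF Px Jx] bounded_linear_blinfun_block[OF Px Jly]
    bounded_linear_blinfun_block[OF Ply Jx] bounded_linear_blinfun_block[OF Ply Jly]
  show "bounded_linear (dx_fx (blinfun_apply A))" "onorm (dx_fx (blinfun_apply A)) \<le> norm A"
    "bounded_linear (dly_fx (blinfun_apply A))" "onorm (dly_fx (blinfun_apply A)) \<le> norm A"
    "bounded_linear (dx_fly (blinfun_apply A))" "onorm (dx_fly (blinfun_apply A)) \<le> norm A"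
    "bounded_linear (dly_fly (blinfun_apply A))" "onorm (dly_fly (blinfun_apply A)) \<le> norm A"
    by simp_all
qed

lemma unstable_part_blinfun_split:
  "fst (snd (blinfun_apply A (a,b,c))) = dx_fx (blinfun_apply A) b + dly_fx (blinfun_apply A) (a,c)"
  using blinfun.add_right[of A "(0,b,0)" "(a,0,c)"] by (simp add: dx_fx_def dly_fx_def)

lemma center_stable_part_blinfun_split:
  "(fst (blinfun_apply A (a,b,c)), snd (snd (blinfun_apply A (a,b,c))))
     = dly_fly (blinfun_apply A) (a,c) + dx_fly (blinfun_apply A) b"
  using blinfun.add_right[of A "(0,b,0)" "(a,0,c)"] by (simp add: dx_fly_def dly_fly_def)

lemma entry_abs_le_onorm:
  assumes "bounded_linear T" "i \<in> Basis" "j \<in> Basis"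
  shows "\<bar>T j \<bullet> i\<bar> \<le> onorm T"
  using Basis_le_norm[OF assms(2), of "T j"] onorm[OF assms(1), of j] assms(3) by simp

lemma integral_in_interval_maps:
  fixes G :: "'p \<Rightarrow> 'a::euclidean_space \<Rightarrow> 'b::euclidean_space" and p :: "real \<Rightarrow> 'p"
  assumes lin: "\<And>t. t \<in> {0..1} \<Longrightarrow> linear (G (p t))"
    and int: "\<And>x. (\<lambda>t. G (p t) x) integrable_on {0..1}"
    and pU: "\<And>t. t \<in> {0..1} \<Longrightarrow> p t \<in> U"
    and bdd: "\<And>i j. i \<in> Basis \<Longrightarrow> j \<in> Basis \<Longrightarrow> bounded ((\<lambda>w. G w j \<bullet> i) ` U)"
  shows "(\<lambda>x. integral {0..1} (\<lambda>t. G (p t) x)) \<in> interval_maps G U"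
  unfolding interval_maps_def
proof (intro CollectI conjI ballI)
  show "linear (\<lambda>x. integral {0..1} (\<lambda>t. G (p t) x))"
  proof (rule linearI)
    fix x y
    have "integral {0..1} (\<lambda>t. G (p t) (x + y)) = integral {0..1} (\<lambda>t. G (p t) x + G (p t) y)"
      by (rule integral_cong) (simp add: linear_add[OF lin])
    then show "integral {0..1} (\<lambda>t. G (p t) (x + y))
        = integral {0..1} (\<lambda>t. G (p t) x) + integral {0..1} (\<lambda>t. G (p t) y)"
      by (simp add: integral_add[OF int int])
  next
    fix r x
    have "integral {0..1} (\<lambda>t. G (p t) (r *\<^sub>R x)) = integral {0..1} (\<lambda>t. r *\<^sub>R G (p t) x)"
      by (rule integral_cong) (simp add: linear_scale[OF lin])
    then show "integral {0..1} (\<lambda>t. G (p t) (r *\<^sub>R x)) = r *\<^sub>R integral {0..1} (\<lambda>t. G (p t) x)"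
      by simp
  qed
  fix i :: 'b and j :: 'a assume i: "i \<in> Basis" and j: "j \<in> Basis"
  have entry: "integral {0..1} (\<lambda>t. G (p t) j) \<bullet> i = integral {0..1} (\<lambda>t. G (p t) j \<bullet> i)"
    using integral_linear[OF int bounded_linear_inner_left[of i]] by (simp add: o_def)
  have int_entry: "(\<lambda>t. G (p t) j \<bullet> i) integrable_on {0..1}"
    using integrable_linear[OF int bounded_linear_inner_left[of i]] by (simp add: o_def)
  have "integral {0..1} (\<lambda>t::real. INF w\<in>U. G w j \<bullet> i) \<le> integral {0..1} (\<lambda>t. G (p t) j \<bullet> i)"
    by (intro integral_le int_entry integrable_const_ivl cINF_lower pU bounded_imp_bdd_below bdd i j)
  then show "(INF w\<in>U. G w j \<bullet> i) \<le> integral {0..1} (\<lambda>t. G (p t) j) \<bullet> i"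
    by (simp add: entry)
  have "integral {0..1} (\<lambda>t. G (p t) j \<bullet> i) \<le> integral {0..1} (\<lambda>t::real. SUP w\<in>U. G w j \<bullet> i)"
    by (intro integral_le int_entry integrable_const_ivl cSUP_upper pU bounded_imp_bdd_above bdd i j)
  then show "integral {0..1} (\<lambda>t. G (p t) j) \<bullet> i \<le> (SUP w\<in>U. G w j \<bullet> i)"
    by (simp add: entry)
qed

lemma convex_Dom: "convex (Dom R)"
  unfolding Dom_def by (intro convex_Times convex_UNIV convex_cball)

lemma interior_Dom: "interior (Dom R) = UNIV \<times> ball 0 R \<times> ball 0 R"
  by (simp add: Dom_def interior_Times interior_cball)

lemma closure_interior_Dom: "0 < R \<Longrightarrow> closure (interior (Dom R)) = Dom R"
  by (subst interior_Dom) (simp add: Dom_def closure_Times closure_ball)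

lemma continuous_intvecs_valued_constant:
  fixes g :: "'a::topological_space \<Rightarrow> real^'n"
  assumes "connected S" "continuous_on S g" "\<And>w. w \<in> S \<Longrightarrow> g w \<in> intvecs" "w \<in> S" "w' \<in> S"
  shows "g w = g w'"
proof -
  have "(\<lambda>w. g w $ i) constant_on S" for i
  proof (rule continuous_discrete_range_constant[OF assms(1)])
    show "continuous_on S (\<lambda>w. g w $ i)" by (intro continuous_intros assms(2))
    fix x assume x: "x \<in> S"
    show "\<exists>e>0. \<forall>y. y \<in> S \<and> g y $ i \<noteq> g x $ i \<longrightarrow> e \<le> norm (g y $ i - g x $ i)"
    proof (intro exI[of _ 1] conjI allI impI)
      fix y assume y: "y \<in> S \<and> g y $ i \<noteq> g x $ i"
      then have "g y $ i - g x $ i \<in> \<int>"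
        using assms(3) x unfolding intvecs_def by auto
      then obtain n where "g y $ i - g x $ i = of_int n" by (auto elim: Ints_cases)
      moreover from this y have "n \<noteq> 0" by auto
      ultimately show "1 \<le> norm (g y $ i - g x $ i)" by simp
    qed simp
  qed
  with assms(4,5) show ?thesis by (simp add: vec_eq_iff constant_on_def) metis
qed

lemma linepath_in_Dom: "z \<in> Dom R \<Longrightarrow> w \<in> Dom R \<Longrightarrow> t \<in> {0..1} \<Longrightarrow> linepath z w t \<in> Dom R"
  using closed_segment_subset[OF _ _ convex_Dom] linepath_image_01 by blast

lemma linepath_in_Pset_midpoint:
  assumes "z \<in> Dom R" "w \<in> Dom R" "norm (fst w - fst z) \<le> RLam" "t \<in> {0..1}"
  shows "linepath z w t \<in> Pset R (linepath z w (1/2))"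
proof -
  have "fst (linepath z w t) - fst (linepath z w (1/2)) = (t - 1/2) *\<^sub>R (fst w - fst z)"
    by (simp add: linepath_def algebra_simps)
  moreover have "\<bar>t - 1/2\<bar> \<le> 1/2" using assms(4) unfolding abs_le_iff by auto
  ultimately have "norm (fst (linepath z w t) - fst (linepath z w (1/2))) \<le> (1/2) * norm (fst w - fst z)"
    by (metis mult_right_mono norm_ge_zero norm_scaleR real_norm_def)
  then show ?thesis
    using tdist_le_norm[of "fst (linepath z w t)" "fst (linepath z w (1/2))"] linepath_in_Dom[OF assms(1,2,4)] assms(3)
    unfolding Pset_def by (simp add: RLam_def)
qed

locale lifted_torus_map =
  fixes f :: "('c::finite,'u::finite,'s::finite) pt \<Rightarrow> ('c,'u,'s) pt"
    and Df :: "('c,'u,'s) pt \<Rightarrow> ('c,'u,'s) pt \<Rightarrow>\<^sub>L ('c,'u,'s) pt"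
    and R :: real
  assumes R_pos: "0 < R"
    and deriv: "\<And>w. w \<in> Dom R \<Longrightarrow> (f has_derivative blinfun_apply (Df w)) (at w within Dom R)"
    and cont: "continuous_on (Dom R) Df"
    and torus: "\<And>k w. k \<in> intvecs \<Longrightarrow> w \<in> Dom R \<Longrightarrow>
                  fst (f (fst w + k, snd w)) - fst (f w) \<in> intvecs \<and> snd (f (fst w + k, snd w)) = snd (f w)"
begin

lemma lattice_shift_eq_translate:
  assumes k: "k \<in> intvecs" and w0: "w0 \<in> Dom R" and w: "w \<in> Dom R"
  shows "f (fst w + k, snd w) = f w + (fst (f (fst w0 + k, snd w0)) - fst (f w0), 0)"
proof -
  define g where "g w = fst (f (fst w + k, snd w)) - fst (f w)" for w
  have fc: "continuous_on (Dom R) f"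
    using deriv has_derivative_continuous continuous_on_eq_continuous_within by blast
  have "continuous_on (Dom R) g" unfolding g_def
    by (intro continuous_intros continuous_on_compose2[OF fc])
       (auto simp: Dom_def mem_Times_iff intro!: continuous_intros)
  then have "g w = g w0"
    using continuous_intvecs_valued_constant[OF convex_connected[OF convex_Dom]] torus[OF k] w w0
    by (metis g_def)
  then show ?thesis using torus[OF k w] by (simp add: prod_eq_iff g_def algebra_simps)
qed

lemma Df_lattice_periodic:
  assumes k: "k \<in> intvecs" and w: "w \<in> interior (Dom R)"
  shows "Df (fst w + k, snd w) = Df w"
proof -
  have wD: "w \<in> Dom R" using w interior_subset by blast
  have w': "w + (k,0) \<in> interior (Dom R)" using w by (simp add: interior_Dom mem_Times_iff)
  define C where "C = (fst (f (fst w + k, snd w)) - fst (f w), 0 :: (real^'u) \<times> (real^'s))"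
  have shift: "f (u + (k,0)) = f u + C" if "u \<in> interior (Dom R)" for u
    using lattice_shift_eq_translate[OF k wD, of u] that interior_subset
    by (force simp: C_def plus_prod_def)
  have "(f has_derivative blinfun_apply (Df (w + (k,0)))) (at (w + (k,0)))"
    using deriv[OF interior_subset[THEN subsetD, OF w']] at_within_interior[OF w'] by simp
  from has_derivative_compose[OF has_derivative_add_const[OF has_derivative_ident] this]
  have A: "((\<lambda>u. f (u + (k,0))) has_derivative blinfun_apply (Df (w + (k,0)))) (at w)" by simp
  have "((\<lambda>u. f u + C) has_derivative blinfun_apply (Df w)) (at w)"
    using has_derivative_add_const[OF deriv[OF wD]] at_within_interior[OF w] by simp
  then have B: "((\<lambda>u. f (u + (k,0))) has_derivative blinfun_apply (Df w)) (at w)"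
    by (rule has_derivative_transform_within_open[OF _ open_interior w]) (simp add: shift)
  show ?thesis using has_derivative_unique[OF A B] by (intro blinfun_eqI) (simp add: plus_prod_def)
qed

text \<open>Periodicity reduces the sup of \<open>norm \<circ> Df\<close> to a compact fundamental domain.\<close>
lemma Df_bounded: obtains B where "\<And>w. w \<in> Dom R \<Longrightarrow> norm (Df w) \<le> B"
proof -
  define C :: "('c,'u,'s) pt set" where "C = cbox 0 (vec 1) \<times> cball 0 R \<times> cball 0 R"
  have CD: "C \<subseteq> Dom R" by (auto simp: C_def Dom_def)
  have "compact C" unfolding C_def by (intro compact_Times compact_cbox compact_cball)
  then have "compact (Df ` C)" by (rule compact_continuous_image[OF continuous_on_subset[OF cont CD]])
  then obtain B where B: "\<And>w. w \<in> C \<Longrightarrow> norm (Df w) \<le> B"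
    using compact_imp_bounded bounded_iff by (metis image_eqI)
  have "norm (Df w) \<le> B" if w: "w \<in> interior (Dom R)" for w
  proof -
    define k :: "real^'c" where "k = (\<chi> i. - of_int (floor (fst w $ i)))"
    have k: "k \<in> intvecs" by (simp add: k_def intvecs_def)
    have "(fst w + k, snd w) \<in> C" using w
      by (auto simp: C_def k_def mem_box_cart interior_Dom mem_Times_iff)
         (smt (verit) real_of_int_floor_add_one_gt)
    then show ?thesis using B Df_lattice_periodic[OF k w] by metis
  qed
  then show ?thesis
    using that continuous_on_closure_norm_le[of "interior (Dom R)" Df] cont closure_interior_Dom[OF R_pos]
    by metis
qed

lemma continuous_on_Df_linepath:
  assumes "z \<in> Dom R" "w \<in> Dom R"
  shows "continuous_on {0..1} (\<lambda>t. blinfun_apply (Df (linepath z w t)) v)"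
  by (intro blinfun.continuous_on continuous_on_const continuous_on_compose2[OF cont]
      continuous_on_linepath) (use linepath_in_Dom[OF assms] in auto)

lemma bounded_dx_fx_entries:
  assumes "U \<subseteq> Dom R" "i \<in> Basis" "j \<in> Basis"
  shows "bounded ((\<lambda>w. dx_fx (blinfun_apply (Df w)) j \<bullet> i) ` U)"
proof -
  obtain B where B: "\<And>w. w \<in> Dom R \<Longrightarrow> norm (Df w) \<le> B" using Df_bounded by blast
  have "\<bar>dx_fx (blinfun_apply (Df w)) j \<bullet> i\<bar> \<le> B" if "w \<in> U" for w
    using entry_abs_le_onorm[OF bounded_linear_dx_fx assms(2,3)] onorm_dx_fx_le B assms(1) that
    by (meson order_trans subsetD)
  then show ?thesis unfolding bounded_iff by (auto intro!: exI[of _ B])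
qed

lemma bdd_above_onorm_dly_fx: "bdd_above ((\<lambda>w. onorm (dly_fx (blinfun_apply (Df w)))) ` Dom R)"
proof -
  obtain B where "\<And>w. w \<in> Dom R \<Longrightarrow> norm (Df w) \<le> B" using Df_bounded by blast
  then show ?thesis by (intro bdd_aboveI2[of _ _ B]) (meson onorm_dly_fx_le order_trans)
qed

lemma bdd_above_mu_cs1_terms:
  assumes "0 \<le> L"
  shows "bdd_above ((\<lambda>w. onorm (dly_fly (blinfun_apply (Df w))) + L * onorm (dx_fly (blinfun_apply (Df w)))) ` Dom R)"
proof -
  obtain B where B: "\<And>w. w \<in> Dom R \<Longrightarrow> norm (Df w) \<le> B" using Df_bounded by blast
  show ?thesis
  proof (rule bdd_aboveI2[of _ _ "B + L * B"])
    fix w :: "('c,'u,'s) pt" assume "w \<in> Dom R"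
    then have "norm (Df w) \<le> B" by (rule B)
    then have "onorm (dly_fly (blinfun_apply (Df w))) \<le> B" "onorm (dx_fly (blinfun_apply (Df w))) \<le> B"
      using onorm_dly_fly_le[of "Df w"] onorm_dx_fly_le[of "Df w"] by linarith+
    then show "onorm (dly_fly (blinfun_apply (Df w))) + L * onorm (dx_fly (blinfun_apply (Df w))) \<le> B + L * B"
      using assms by (simp add: add_mono mult_left_mono)
  qed
qed

lemma INF_minnorm_interval_maps_le:
  assumes y: "y \<in> Dom R"
    and A: "A \<in> interval_maps (\<lambda>w. dx_fx (blinfun_apply (Df w))) (Pset R y)"
  shows "(INF z\<in>Dom R. minnorm_set (interval_maps (\<lambda>w. dx_fx (blinfun_apply (Df w))) (Pset R z)))
           \<le> minnorm A"
proof -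
  have "dx_fx (blinfun_apply (Df x)) \<in> interval_maps (\<lambda>w. dx_fx (blinfun_apply (Df w))) (Pset R x)"
    if x: "x \<in> Dom R" for x
  proof -
    have "x \<in> Pset R x" "Pset R x \<subseteq> Dom R"
      using x tdist_le_norm[of "fst x" "fst x"] by (auto simp: Pset_def RLam_def)
    then show ?thesis unfolding interval_maps_def
      by (auto intro!: bounded_linear.linear[OF bounded_linear_dx_fx] cINF_lower cSUP_upper
          bounded_imp_bdd_below bounded_imp_bdd_above bounded_dx_fx_entries)
  qed
  then have "bdd_below ((\<lambda>z. minnorm_set (interval_maps (\<lambda>w. dx_fx (blinfun_apply (Df w))) (Pset R z))) ` Dom R)"
    by (intro bdd_belowI2[of _ 0] minnorm_set_nonneg) blast
  then have "(INF z\<in>Dom R. minnorm_set (interval_maps (\<lambda>w. dx_fx (blinfun_apply (Df w))) (Pset R z)))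
      \<le> minnorm_set (interval_maps (\<lambda>w. dx_fx (blinfun_apply (Df w))) (Pset R y))"
    by (rule cINF_lower[OF _ y])
  also have "\<dots> \<le> minnorm A"
    unfolding minnorm_set_def by (rule cINF_lower[OF bdd_belowI2[of _ 0] A]) (rule minnorm_nonneg)
  finally show ?thesis .
qed

lemma has_integral_Df_linepath:
  "z \<in> Dom R \<Longrightarrow> w \<in> Dom R \<Longrightarrow>
     ((\<lambda>t. blinfun_apply (Df (linepath z w t)) (w - z)) has_integral f w - f z) {0..1}"
  using has_integral_derivative_linepath[OF convex_Dom _ _ deriv] by blast

lemma integrable_dx_fx_linepath:
  "z \<in> Dom R \<Longrightarrow> w \<in> Dom R \<Longrightarrow> (\<lambda>t. dx_fx (blinfun_apply (Df (linepath z w t))) v) integrable_on {0..1}"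
  unfolding dx_fx_def by (intro integrable_continuous_real continuous_intros continuous_on_Df_linepath)

lemma integrable_dly_fx_linepath:
  "z \<in> Dom R \<Longrightarrow> w \<in> Dom R \<Longrightarrow> (\<lambda>t. dly_fx (blinfun_apply (Df (linepath z w t))) v) integrable_on {0..1}"
  unfolding dly_fx_def case_prod_unfold
  by (intro integrable_continuous_real continuous_intros continuous_on_Df_linepath)

lemma unstable_part_diff_eq_integrals:
  assumes z: "z \<in> Dom R" and w: "w \<in> Dom R" and wz: "w - z = (a, b, c)"
  shows "fst (snd (f w - f z))
    = integral {0..1} (\<lambda>t. dx_fx (blinfun_apply (Df (linepath z w t))) b)
      + integral {0..1} (\<lambda>t. dly_fx (blinfun_apply (Df (linepath z w t))) (a, c))"
proof (rule has_integral_unique)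
  show "((\<lambda>t. fst (snd (blinfun_apply (Df (linepath z w t)) (w - z)))) has_integral fst (snd (f w - f z))) {0..1}"
    using has_integral_linear[OF has_integral_Df_linepath[OF z w]
        bounded_linear_compose[OF bounded_linear_fst bounded_linear_snd]]
    by (simp add: o_def)
  show "((\<lambda>t. fst (snd (blinfun_apply (Df (linepath z w t)) (w - z)))) has_integral
      integral {0..1} (\<lambda>t. dx_fx (blinfun_apply (Df (linepath z w t))) b)
      + integral {0..1} (\<lambda>t. dly_fx (blinfun_apply (Df (linepath z w t))) (a, c))) {0..1}"
    unfolding wz unstable_part_blinfun_split
    by (intro has_integral_add integrable_integral integrable_dx_fx_linepath integrable_dly_fx_linepath z w)
qed

lemma norm_integral_dly_fx_linepath_le:
  assumes z: "z \<in> Dom R" and w: "w \<in> Dom R"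
  shows "norm (integral {0..1} (\<lambda>t. dly_fx (blinfun_apply (Df (linepath z w t))) v))
           \<le> (SUP y\<in>Dom R. onorm (dly_fx (blinfun_apply (Df y)))) * norm v"
proof (rule has_integral_unit_interval_norm_le[OF integrable_integral[OF integrable_dly_fx_linepath[OF z w]]])
  fix t :: real assume t: "t \<in> {0..1}"
  have "norm (dly_fx (blinfun_apply (Df (linepath z w t))) v)
          \<le> onorm (dly_fx (blinfun_apply (Df (linepath z w t)))) * norm v"
    by (rule onorm[OF bounded_linear_dly_fx])
  also have "\<dots> \<le> (SUP y\<in>Dom R. onorm (dly_fx (blinfun_apply (Df y)))) * norm v"
    by (intro mult_right_mono cSUP_upper linepath_in_Dom[OF z w t] bdd_above_onorm_dly_fx) simp
  finally show "norm (dly_fx (blinfun_apply (Df (linepath z w t))) v)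
          \<le> (SUP y\<in>Dom R. onorm (dly_fx (blinfun_apply (Df y)))) * norm v" .
qed

text \<open>The average of \<open>\<partial>\<^sub>xf\<^sub>x\<close> along the segment lies in the interval matrix over \<open>P\<close> of the
  midpoint: the condition \<open>L > 2R/R\<^sub>\<Lambda>\<close> keeps the \<open>\<lambda>\<close>-extent of the segment below \<open>R\<^sub>\<Lambda>\<close>.\<close>
lemma unstable_part_expansion:
  assumes z: "z \<in> Dom R" and w: "w \<in> Dom R" and cone: "w \<in> Ju z (1/L)" and L: "4 * R < L"
  shows "xi_u1P R L Df * norm (fst (snd w) - fst (snd z)) \<le> norm (fst (snd (f w - f z)))"
proof -
  define a b c where "a = fst w - fst z" and "b = fst (snd w) - fst (snd z)"
    and "c = snd (snd w) - snd (snd z)"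
  have wz: "w - z = (a, b, c)" by (simp add: a_def b_def c_def prod_eq_iff)
  have L0: "0 < L" using L R_pos by linarith
  have ac: "norm (a, c) \<le> norm b / L" using cone by (simp add: Ju_def a_def b_def c_def)
  have "norm b \<le> R + R"
    using z w norm_triangle_ineq4[of "fst (snd w)" "fst (snd z)"] by (auto simp: b_def Dom_def mem_Times_iff)
  moreover have "L * norm a \<le> norm b"
    using order_trans[OF norm_fst_le ac] L0 by (simp add: field_simps)
  ultimately have "L * norm a \<le> L * (1/2)" using L by linarith
  then have "norm a \<le> RLam" using L0 by (simp add: RLam_def)
  define A where "A x = integral {0..1} (\<lambda>t. dx_fx (blinfun_apply (Df (linepath z w t))) x)" for x
  define E where "E = integral {0..1} (\<lambda>t. dly_fx (blinfun_apply (Df (linepath z w t))) (a, c))"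
  define I where "I = (INF y\<in>Dom R. minnorm_set (interval_maps (\<lambda>w. dx_fx (blinfun_apply (Df w))) (Pset R y)))"
  define K where "K = (SUP y\<in>Dom R. onorm (dly_fx (blinfun_apply (Df y))))"
  have "A \<in> interval_maps (\<lambda>w. dx_fx (blinfun_apply (Df w))) (Pset R (linepath z w (1/2)))"
    unfolding A_def
  proof (rule integral_in_interval_maps)
    show "linepath z w t \<in> Pset R (linepath z w (1/2))" if "t \<in> {0..1}" for t
      using linepath_in_Pset_midpoint[OF z w _ that] \<open>norm a \<le> RLam\<close> by (simp add: a_def)
    show "bounded ((\<lambda>w. dx_fx (blinfun_apply (Df w)) j \<bullet> i) ` Pset R (linepath z w (1/2)))"
      if "i \<in> Basis" "j \<in> Basis" for i j
      using bounded_dx_fx_entries[OF _ that] by (simp add: Pset_def subset_iff)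
  qed (simp_all add: bounded_linear.linear[OF bounded_linear_dx_fx] integrable_dx_fx_linepath[OF z w])
  then have "I \<le> minnorm A"
    unfolding I_def by (rule INF_minnorm_interval_maps_le[rotated]) (rule linepath_in_Dom[OF z w], simp)
  have "0 \<le> K"
    using onorm_pos_le[OF bounded_linear_dly_fx, of "Df z"] cSUP_upper[OF z bdd_above_onorm_dly_fx]
    unfolding K_def by linarith
  have "norm E \<le> K * norm (a, c)"
    unfolding E_def K_def by (rule norm_integral_dly_fx_linepath_le[OF z w])
  have "xi_u1P R L Df * norm b = I * norm b - K * (norm b / L)"
    unfolding xi_u1P_def I_def K_def by (simp add: algebra_simps)
  also have "\<dots> \<le> minnorm A * norm b - norm E"
    using mult_right_mono[OF \<open>I \<le> minnorm A\<close> norm_ge_zero[of b]] mult_left_mono[OF ac \<open>0 \<le> K\<close>]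
      \<open>norm E \<le> K * norm (a, c)\<close> by linarith
  also have "\<dots> \<le> norm (A b + E)"
    using minnorm_le[of A b] norm_triangle_ineq4[of "A b + E" E] by simp
  finally show ?thesis
    using unstable_part_diff_eq_integrals[OF z w wz] by (simp add: A_def E_def b_def)
qed

lemma center_stable_part_contraction:
  assumes z: "z \<in> Dom R" and w: "w \<in> Dom R" and cone: "w \<in> Ju z (1/L)" and L: "0 < L"
  shows "norm (fst (f w - f z), snd (snd (f w - f z)))
           \<le> mu_cs1 R L Df * (norm (fst (snd w) - fst (snd z)) / L)"
proof -
  define a b c where "a = fst w - fst z" and "b = fst (snd w) - fst (snd z)"
    and "c = snd (snd w) - snd (snd z)"
  have wz: "w - z = (a, b, c)" by (simp add: a_def b_def c_def prod_eq_iff)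
  have ac: "norm (a, c) \<le> norm b / L" using cone by (simp add: Ju_def a_def b_def c_def)
  define P where "P u = (fst u, snd (snd u))" for u :: "('c,'u,'s) pt"
  have "bounded_linear P" unfolding P_def
    by (intro bounded_linear_Pair bounded_linear_fst bounded_linear_compose[OF bounded_linear_snd bounded_linear_snd])
  from has_integral_linear[OF has_integral_Df_linepath[OF z w] this]
  have "((\<lambda>t. P (blinfun_apply (Df (linepath z w t)) (w - z))) has_integral P (f w - f z)) {0..1}"
    by (simp add: o_def)
  then have "norm (P (f w - f z)) \<le> mu_cs1 R L Df * (norm b / L)"
  proof (rule has_integral_unit_interval_norm_le)
    fix t :: real assume t: "t \<in> {0..1}"
    let ?D = "blinfun_apply (Df (linepath z w t))"
    have "norm (P (?D (w - z))) \<le> norm (dly_fly ?D (a, c)) + norm (dx_fly ?D b)"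
      unfolding wz P_def center_stable_part_blinfun_split by (rule norm_triangle_ineq)
    also have "\<dots> \<le> onorm (dly_fly ?D) * (norm b / L) + onorm (dx_fly ?D) * norm b"
      using onorm[OF bounded_linear_dly_fly, of _ "(a, c)"] onorm[OF bounded_linear_dx_fly, of _ b]
        mult_left_mono[OF ac onorm_pos_le[OF bounded_linear_dly_fly]]
      by (meson add_mono order_trans)
    also have "\<dots> = (onorm (dly_fly ?D) + L * onorm (dx_fly ?D)) * (norm b / L)"
      using L by (simp add: field_simps)
    also have "\<dots> \<le> mu_cs1 R L Df * (norm b / L)"
      unfolding mu_cs1_def using L
      by (intro mult_right_mono cSUP_upper linepath_in_Dom[OF z w t] bdd_above_mu_cs1_terms) auto
    finally show "norm (P (?D (w - z))) \<le> mu_cs1 R L Df * (norm b / L)" .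
  qed
  then show ?thesis by (simp add: P_def b_def)
qed

end

theorem corollary4p1:
  fixes f :: "('c::finite,'u::finite,'s::finite) pt \<Rightarrow> ('c,'u,'s) pt"
    and Df :: "('c,'u,'s) pt \<Rightarrow> ('c,'u,'s) pt \<Rightarrow>\<^sub>L ('c,'u,'s) pt"
    and R L :: real and z :: "('c,'u,'s) pt"
  assumes R: "0 < R" "R < RLam / 2"
    and L: "2 * R / RLam < L" "L < 1"
    and deriv: "\<And>w. w \<in> Dom R \<Longrightarrow> (f has_derivative blinfun_apply (Df w)) (at w within Dom R)"
    and cont: "continuous_on (Dom R) Df"
    and torus: "\<And>k w. k \<in> intvecs \<Longrightarrow> w \<in> Dom R \<Longrightarrow>
                  fst (f (fst w + k, snd w)) - fst (f w) \<in> intvecs \<and> snd (f (fst w + k, snd w)) = snd (f w)"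
    and rate: "rate_conditions_0 R L Df"
    and z: "z \<in> Dom R"
  shows "f ` (Ju z (1/L) \<inter> Dom R) \<subseteq> interior (Ju (f z) (1/L)) \<union> {f z}"
proof
  interpret lifted_torus_map f Df R using R(1) deriv cont torus by unfold_locales
  have L4: "4 * R < L" using L(1) by (simp add: RLam_def)
  have L0: "0 < L" using L4 R(1) by linarith
  fix q assume "q \<in> f ` (Ju z (1/L) \<inter> Dom R)"
  then obtain w where cone: "w \<in> Ju z (1/L)" and w: "w \<in> Dom R" and q: "q = f w" by auto
  define b where "b = fst (snd w) - fst (snd z)"
  show "q \<in> interior (Ju (f z) (1/L)) \<union> {f z}"
  proof (cases "b = 0")
    case True
    then have "w = z" using cone by (simp add: Ju_def b_def prod_eq_iff)
    then show ?thesis using q by simp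
  next
    case False
    have "norm (fst (f w - f z), snd (snd (f w - f z))) \<le> mu_cs1 R L Df * (norm b / L)"
      unfolding b_def by (rule center_stable_part_contraction[OF z w cone L0])
    also have "\<dots> < xi_u1P R L Df * (norm b / L)"
      using rate False L0 by (intro mult_strict_right_mono) (auto simp: rate_conditions_0_def)
    also have "\<dots> \<le> 1/L * norm (fst (snd (f w - f z)))"
      using divide_right_mono[OF unstable_part_expansion[OF z w cone L4], of L] L0 by (simp add: b_def)
    finally have "f w \<in> {p. norm (fst p - fst (f z), snd (snd p) - snd (snd (f z)))
                             < 1/L * norm (fst (snd p) - fst (snd (f z)))}"
      by simp
    then show ?thesis using strict_cone_subset_interior_Ju q by blast
  qed
qed

end
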